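(* Let $X\subseteq\mathbb{C}^n$ be a complex analytic set, $x\in X$, $\mathcal M\subseteq\mathcal O_{X,x}^p$ a submodule with matrix of generators $[\mathcal M]=[g_1\cdots g_r]$, and $k\in\mathbb N$. Write the matrix of generators of $\mathcal M_D$ as $$[\mathcal M_D]=\begin{bmatrix}[\mathcal M]&0\\ [\mathcal M]'&[\tilde{\mathcal M}]\end{bmatrix},$$ where the columns of $[\tilde{\mathcal M}]$ are $(z_i-z_i')g_j'$, $i=1,\dots,n$, $j=1,\dots,r$. Let $\mathcal J_{2k}(\mathcal M_D)$ be the ideal generated by $\{\det(\mathcal M_{IJ})\det(\tilde{\mathcal M}_{KL}): I,J,K,L\ k\text{-indexes}\}$. Then $\mathcal J_{2k}(\mathcal M_D)\subseteq I_\Delta^{k-1}J_2\big((J_k(\mathcal M))_D\big)$ at $(x,x)$.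
   Context: $z_1,\dots,z_n$ are coordinates on $\mathbb C^n$; $\pi_1,\pi_2:X\times X\to X$ are the projections; for an object $A$ on $X$ we write $A$ for $A\circ\pi_1$ and $A'$ for $A\circ\pi_2$. $I_\Delta=(z_1-z_1',\dots,z_n-z_n')$ is the ideal of the diagonal. For a matrix $A$ and $k$-indexes (strictly increasing tuples) $I,J$, $A_{IJ}$ is the submatrix with rows $I$ and columns $J$. For $h\in\mathcal O_X^q$, $h_D=(h\circ\pi_1,h\circ\pi_2)$, and for a submodule or ideal $N$, $N_D$ is generated by $\{h_D:h\in N\}$. $J_m(N)$ is the ideal of $m\times m$ minors of a matrix of generators of $N$. *)

theory Defs
  imports "HOL-Analysis.Analysis" "HOL-Combinatorics.Permutations"
begin

definition holo_on :: "(complex^'m) set \<Rightarrow> (complex^'m \<Rightarrow> complex) \<Rightarrow> bool" where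
  "holo_on U f \<longleftrightarrow> open U \<and>
     (\<forall>w\<in>U. \<exists>D. (f has_derivative D) (at w) \<and> (\<forall>c v. D (c *s v) = c * D v))"

definition analytic_set :: "(complex^'n) set \<Rightarrow> bool" where
  "analytic_set X \<longleftrightarrow> (\<forall>a\<in>X. \<exists>U F. a \<in> U \<and> open U \<and> finite F \<and> (\<forall>f\<in>F. holo_on U f)
       \<and> X \<inter> U = {w\<in>U. \<forall>f\<in>F. f w = 0})"

text \<open>C^{2n} = C^n x C^n with coordinates (z, z'); projections and diagonal point.\<close>
definition pr1 :: "complex^('n + 'n) \<Rightarrow> complex^'n" where
  "pr1 w = (\<chi> i. w $ Inl i)"
definition pr2 :: "complex^('n + 'n) \<Rightarrow> complex^'n" where
  "pr2 w = (\<chi> i. w $ Inr i)"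
definition dpt :: "complex^'n \<Rightarrow> complex^('n + 'n)" where
  "dpt x = (\<chi> i. case i of Inl j \<Rightarrow> x $ j | Inr j \<Rightarrow> x $ j)"
definition double :: "(complex^'n) set \<Rightarrow> (complex^('n + 'n)) set" where
  "double X = {w. pr1 w \<in> X \<and> pr2 w \<in> X}"

definition germ_ideal_mem :: "(complex^'m) set \<Rightarrow> complex^'m \<Rightarrow> (complex^'m \<Rightarrow> complex) set
     \<Rightarrow> (complex^'m \<Rightarrow> complex) \<Rightarrow> bool" where
  "germ_ideal_mem Y a G f \<longleftrightarrow> finite G \<and> (\<exists>U c. a \<in> U \<and> (\<forall>h\<in>G. holo_on U (c h)) \<and>
       (\<forall>w\<in>Y \<inter> U. f w = (\<Sum>h\<in>G. c h w * h w)))"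

text \<open>k-index: k distinct indices from S (ordering only affects the sign of a minor).\<close>
definition kindex :: "nat \<Rightarrow> 'a set \<Rightarrow> 'a list \<Rightarrow> bool" where
  "kindex k S ls \<longleftrightarrow> length ls = k \<and> distinct ls \<and> set ls \<subseteq> S"

definition minor :: "('r \<Rightarrow> 'c \<Rightarrow> 'v \<Rightarrow> complex) \<Rightarrow> 'r list \<Rightarrow> 'c list \<Rightarrow> 'v \<Rightarrow> complex" where
  "minor A rs cs w = (\<Sum>q\<in>{q. q permutes {..<length rs}}.
       of_int (sign q) * (\<Prod>i<length rs. A (rs ! i) (cs ! (q i)) w))"

definition Mtil :: "(nat \<Rightarrow> nat \<Rightarrow> complex^'n \<Rightarrow> complex) \<Rightarrow> nat \<Rightarrow> ('n \<times> nat) \<Rightarrow> complex^('n+'n) \<Rightarrow> complex" where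
  "Mtil g i lj w = (pr1 w $ fst lj - pr2 w $ fst lj) * g i (snd lj) (pr2 w)"

definition J2k_gens :: "nat \<Rightarrow> nat \<Rightarrow> nat \<Rightarrow> (nat \<Rightarrow> nat \<Rightarrow> complex^'n \<Rightarrow> complex) \<Rightarrow> (complex^('n+'n) \<Rightarrow> complex) set" where
  "J2k_gens p r k g = {(\<lambda>w. minor g I J (pr1 w) * minor (Mtil g) K L w) | I J K L.
      kindex k {..<p} I \<and> kindex k {..<r} J \<and> kindex k {..<p} K \<and> kindex k (UNIV \<times> {..<r}) L}"

definition Jk_idx :: "nat \<Rightarrow> nat \<Rightarrow> nat \<Rightarrow> (nat list \<times> nat list) set" where
  "Jk_idx p r k = {(I, J). kindex k {..<p} I \<and> kindex k {..<r} J}"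

text \<open>Matrix of generators of (J_k(M))_D: 2 rows; columns (m, m') and (0, (z_l - z_l') m').\<close>
definition JkD :: "(nat \<Rightarrow> nat \<Rightarrow> complex^'n \<Rightarrow> complex) \<Rightarrow> nat
     \<Rightarrow> ((nat list \<times> nat list) + ('n \<times> (nat list \<times> nat list))) \<Rightarrow> complex^('n+'n) \<Rightarrow> complex" where
  "JkD g rw col w =
     (case col of
        Inl c \<Rightarrow> (if rw = 0 then minor g (fst c) (snd c) (pr1 w) else minor g (fst c) (snd c) (pr2 w))
      | Inr (l, c) \<Rightarrow> (if rw = 0 then 0 else (pr1 w $ l - pr2 w $ l) * minor g (fst c) (snd c) (pr2 w)))"

definition JkD_cols :: "nat \<Rightarrow> nat \<Rightarrow> nat \<Rightarrow> ((nat list \<times> nat list) + ('n \<times> (nat list \<times> nat list))) set" where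
  "JkD_cols p r k = Inl ` Jk_idx p r k \<union> Inr ` (UNIV \<times> Jk_idx p r k)"

definition J2JkD_gens :: "nat \<Rightarrow> nat \<Rightarrow> nat \<Rightarrow> (nat \<Rightarrow> nat \<Rightarrow> complex^'n \<Rightarrow> complex) \<Rightarrow> (complex^('n+'n) \<Rightarrow> complex) set" where
  "J2JkD_gens p r k g = {minor (JkD g) rs cs | rs cs. kindex 2 {..<2} rs \<and> kindex 2 (JkD_cols p r k) cs}"

definition Idiag_pow_gens :: "nat \<Rightarrow> (complex^('n::finite+'n) \<Rightarrow> complex) set" where
  "Idiag_pow_gens m = {(\<lambda>w. \<Prod>t<m. (pr1 w $ (ls ! t) - pr2 w $ (ls ! t))) | ls :: 'n list. length ls = m}"

definition prod_gens :: "('v \<Rightarrow> complex) set \<Rightarrow> ('v \<Rightarrow> complex) set \<Rightarrow> ('v \<Rightarrow> complex) set" where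
  "prod_gens A B = {(\<lambda>w. a w * b w) | a b. a \<in> A \<and> b \<in> B}"

end

theory Submission
  imports Defs
begin

text \<open>Factoring the diagonal differences out of the columns of [M~] gives
  det [M~]_{KL} = (z_{l_1} - z_{l_1}') \<cdots> (z_{l_k} - z_{l_k}') det [M']_{K,J'},
  where J' lists the g-indices of the columns L. If J' repeats an index this minor vanishes.
  Otherwise the product det [M]_{IJ} (z_{l_k} - z_{l_k}') det [M']_{K,J'} is the 2 \<times> 2 minor of
  [(J_k(M))_D] on the columns (m_{IJ}, m_{IJ}') and (0, (z_{l_k} - z_{l_k}') m_{KJ'}'), and the remaining
  k - 1 differences form a generator of I_\<Delta>^{k-1}. The inclusion thus holds generator by generator
  as an identity of functions on all of C^n \<times> C^n.\<close>

lemma minor_two_by_two: "minor A [a, b] [c, d] w = A a c w * A b d w - A a d w * A b c w"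
proof -
  have fin: "finite {1::nat}" "0 \<notin> {1::nat}" by auto
  have idx: "{..<length [a, b]} = insert (0::nat) {1}" by auto
  show ?thesis
    unfolding minor_def idx sum_over_permutations_insert[OF fin] permutes_sing
    by (simp add: sign_swap_id lessThan_Suc)
qed

lemma minor_eq_0_if_repeated_col:
  assumes "a < length rs" "b < length rs" "a \<noteq> b" and "cs ! a = cs ! b"
  shows "minor A rs cs w = 0"
proof -
  let ?N = "{..<length rs}"
  let ?t = "Transposition.transpose a b"
  let ?F = "\<lambda>q. of_int (sign q) * (\<Prod>i<length rs. A (rs ! i) (cs ! (q i)) w) :: complex"
  have t: "?t permutes ?N" using assms by (simp add: permutes_swap_id)
  have "minor A rs cs w = sum ?F {q. q permutes ?N}" by (simp add: minor_def)
  also have "\<dots> = sum (\<lambda>q. ?F (?t \<circ> q)) {q. q permutes ?N}"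
    by (rule setum_permutations_compose_left[OF t])
  also have "\<dots> = sum (\<lambda>q. - ?F q) {q. q permutes ?N}"
  proof (rule sum.cong[OF refl])
    fix q assume "q \<in> {q. q permutes ?N}"
    then have "permutation q" by (auto intro: permutes_imp_permutation)
    then have "sign (?t \<circ> q) = - sign q"
      using assms by (simp add: sign_compose permutation_swap_id sign_swap_id)
    moreover have "cs ! (?t j) = cs ! j" for j
      using assms(4) by (simp add: Transposition.transpose_def)
    ultimately show "?F (?t \<circ> q) = - ?F q" by simp
  qed
  also have "\<dots> = - minor A rs cs w" by (simp add: minor_def sum_negf)
  finally show ?thesis by simp
qed

lemma minor_scale_cols:
  assumes "length cs = length rs"
  shows "minor (\<lambda>i c w. s c w * A i (\<phi> c) w) rs cs w
           = (\<Prod>t<length rs. s (cs ! t) w) * minor A rs (map \<phi> cs) w"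
proof -
  let ?N = "{..<length rs}"
  have scaled: "of_int (sign q) * (\<Prod>i\<in>?N. s (cs ! q i) w * A (rs ! i) (\<phi> (cs ! q i)) w)
        = (\<Prod>t\<in>?N. s (cs ! t) w) * (of_int (sign q) * (\<Prod>i\<in>?N. A (rs ! i) (map \<phi> cs ! q i) w))"
    if q: "q permutes ?N" for q
  proof -
    have "(\<Prod>i\<in>?N. s (cs ! q i) w) = (\<Prod>t\<in>?N. s (cs ! t) w)"
      using prod.permute[OF q, of "\<lambda>t. s (cs ! t) w"] by (simp add: o_def)
    moreover have "(\<Prod>i\<in>?N. A (rs ! i) (\<phi> (cs ! q i)) w) = (\<Prod>i\<in>?N. A (rs ! i) (map \<phi> cs ! q i) w)"
      using permutes_in_image[OF q] assms by (intro prod.cong) auto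
    ultimately show ?thesis by (simp add: prod.distrib mult_ac)
  qed
  show ?thesis
    unfolding minor_def sum_distrib_left assms by (rule sum.cong[OF refl]) (simp add: scaled)
qed

lemma minor_Mtil:
  assumes "length L = length K"
  shows "minor (Mtil g) K L w
           = (\<Prod>t<length K. pr1 w $ fst (L ! t) - pr2 w $ fst (L ! t)) * minor g K (map snd L) (pr2 w)"
proof -
  have "Mtil g = (\<lambda>i c w. (pr1 w $ fst c - pr2 w $ fst c) * (\<lambda>i j w. g i j (pr2 w)) i (snd c) w)"
    by (simp add: Mtil_def fun_eq_iff)
  then show ?thesis
    using minor_scale_cols[OF assms, where s = "\<lambda>c w. pr1 w $ fst c - pr2 w $ fst c"
        and A = "\<lambda>i j w. g i j (pr2 w)" and \<phi> = snd]
    by (simp add: minor_def)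
qed

lemma minor_JkD_Inl_Inr:
  "minor (JkD g) [0, 1] [Inl (I, J), Inr (l, (K, J'))] w
     = minor g I J (pr1 w) * ((pr1 w $ l - pr2 w $ l) * minor g K J' (pr2 w))"
  by (simp add: minor_two_by_two JkD_def)

lemma finite_kindex: "finite S \<Longrightarrow> finite {ls. kindex k S ls}"
  unfolding kindex_def by (rule finite_subset[OF _ finite_lists_length_eq[of S k]]) auto

lemma finite_Idiag_pow_gens: "finite (Idiag_pow_gens m :: (complex^('n::finite + 'n) \<Rightarrow> complex) set)"
proof -
  have "finite {ls :: 'n list. set ls \<subseteq> UNIV \<and> length ls = m}"
    by (rule finite_lists_length_eq) simp
  moreover have "Idiag_pow_gens m \<subseteq> (\<lambda>ls w. \<Prod>t<m. pr1 w $ (ls ! t) - pr2 w $ (ls ! t))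
          ` {ls :: 'n list. set ls \<subseteq> UNIV \<and> length ls = m}"
    unfolding Idiag_pow_gens_def by auto
  ultimately show ?thesis by (rule finite_subset[OF _ finite_imageI, rotated])
qed

lemma finite_J2JkD_gens: "finite (J2JkD_gens p r k g :: (complex^('n::finite + 'n) \<Rightarrow> complex) set)"
proof -
  have "finite (Jk_idx p r k)"
    by (rule finite_subset[OF _ finite_cartesian_product[OF finite_kindex finite_kindex]])
       (auto simp: Jk_idx_def)
  then have "finite (JkD_cols p r k :: ((nat list \<times> nat list) + ('n \<times> (nat list \<times> nat list))) set)"
    by (simp add: JkD_cols_def)
  then have "finite ((\<lambda>(rs, cs). minor (JkD g) rs cs)
               ` ({rs. kindex 2 {..<2::nat} rs} \<times> {cs. kindex 2 (JkD_cols p r k) cs}))"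
    by (simp add: finite_kindex)
  moreover have "J2JkD_gens p r k g \<subseteq> (\<lambda>(rs, cs). minor (JkD g) rs cs)
               ` ({rs. kindex 2 {..<2} rs} \<times> {cs. kindex 2 (JkD_cols p r k) cs})"
    unfolding J2JkD_gens_def by auto
  ultimately show ?thesis by (rule finite_subset[rotated])
qed

lemma finite_prod_gens:
  assumes "finite A" "finite B"
  shows "finite (prod_gens A B)"
proof (rule finite_subset)
  show "prod_gens A B \<subseteq> (\<lambda>(a, b) w. a w * b w) ` (A \<times> B)"
    unfolding prod_gens_def by auto
qed (use assms in simp)

lemma holo_on_const: "holo_on UNIV (\<lambda>w. c)"
  unfolding holo_on_def by (auto intro!: exI[of _ "\<lambda>v. 0"] has_derivative_const)

lemma germ_ideal_mem_generator:
  assumes "finite G" "h \<in> G"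
  shows "germ_ideal_mem Y a G h"
proof -
  have "(\<Sum>h'\<in>G. (if h' = h then 1 else 0) * h' w) = (\<Sum>h'\<in>G. if h' = h then h w else 0)" for w
    by (rule sum.cong) auto
  then have "h w = (\<Sum>h'\<in>G. (if h' = h then 1 else 0) * h' w)" for w
    using assms by simp
  then show ?thesis
    unfolding germ_ideal_mem_def using assms(1) holo_on_const
    by (intro conjI exI[of _ UNIV] exI[of _ "\<lambda>h' w. if h' = h then 1 else 0"]) auto
qed

lemma germ_ideal_mem_zero: "finite G \<Longrightarrow> germ_ideal_mem Y a G (\<lambda>w. 0)"
  unfolding germ_ideal_mem_def using holo_on_const
  by (intro conjI exI[of _ UNIV] exI[of _ "\<lambda>h w. 0"]) auto

lemma J2k_gen_zero_or_in_prod_gens: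
  assumes "f \<in> J2k_gens p r k g" and "k \<ge> 1"
  shows "f = (\<lambda>w. 0) \<or> f \<in> prod_gens (Idiag_pow_gens (k - 1)) (J2JkD_gens p r k g)"
proof -
  obtain I J K L where f: "f = (\<lambda>w. minor g I J (pr1 w) * minor (Mtil g) K L w)"
    and I: "kindex k {..<p} I" and J: "kindex k {..<r} J" and K: "kindex k {..<p} K"
    and L: "kindex k (UNIV \<times> {..<r}) L"
    using assms(1) unfolding J2k_gens_def by blast
  define J' where "J' = map snd L"
  define ls where "ls = take (k - 1) (map fst L)"
  define l where "l = fst (L ! (k - 1))"
  have len: "length L = k" "length K = k" "length J' = k"
    using K L by (auto simp: kindex_def J'_def)
  let ?\<delta> = "\<lambda>w i. pr1 w $ i - pr2 w $ i"
  define d where "d = (\<lambda>w. \<Prod>t<k - 1. ?\<delta> w (ls ! t))"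
  define m where "m = minor (JkD g) [0, 1] [Inl (I, J), Inr (l, (K, J'))]"
  have diffs: "(\<Prod>t<k. ?\<delta> w (fst (L ! t))) = d w * ?\<delta> w l" for w
  proof -
    have "d w = (\<Prod>t<k - 1. ?\<delta> w (fst (L ! t)))"
      unfolding d_def by (rule prod.cong) (auto simp: ls_def len)
    moreover have "k = Suc (k - 1)" using assms(2) by simp
    ultimately show ?thesis by (metis l_def prod.lessThan_Suc)
  qed
  have f_eq: "f = (\<lambda>w. d w * m w)"
    unfolding f m_def minor_JkD_Inl_Inr minor_Mtil[OF len(1)[folded len(2)]] len(2) diffs
    by (simp add: J'_def fun_eq_iff mult_ac)
  show ?thesis
  proof (cases "distinct J'")
    case True
    then have "(I, J) \<in> Jk_idx p r k" "(K, J') \<in> Jk_idx p r k"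
      using I J K L by (auto simp: Jk_idx_def kindex_def J'_def)
    then have "m \<in> J2JkD_gens p r k g"
      unfolding J2JkD_gens_def m_def
      by (intro CollectI exI conjI refl) (auto simp: kindex_def JkD_cols_def)
    moreover have "d \<in> Idiag_pow_gens (k - 1)"
      unfolding Idiag_pow_gens_def d_def by (intro CollectI exI[of _ ls] conjI refl) (simp add: ls_def len)
    ultimately show ?thesis
      unfolding f_eq prod_gens_def by blast
  next
    case False
    then obtain a b where "a < k" "b < k" "a \<noteq> b" "J' ! a = J' ! b"
      by (auto simp: distinct_conv_nth len)
    then have "minor g K J' v = 0" for v
      using len by (intro minor_eq_0_if_repeated_col[of a K b]) auto
    then show ?thesis unfolding f_eq m_def minor_JkD_Inl_Inr by simp
  qed
qed

theorem mainTheorem12: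
  fixes X :: "(complex^'n) set" and x :: "complex^'n" and p r k :: nat
    and g :: "nat \<Rightarrow> nat \<Rightarrow> complex^'n \<Rightarrow> complex"
  assumes "analytic_set X" and "x \<in> X"
    and "\<exists>U. x \<in> U \<and> (\<forall>i<p. \<forall>j<r. holo_on U (g i j))"
    and "k \<ge> 1"
  shows "\<forall>f\<in>J2k_gens p r k g.
           germ_ideal_mem (double X) (dpt x)
             (prod_gens (Idiag_pow_gens (k - 1)) (J2JkD_gens p r k g)) f"
proof
  fix f assume "f \<in> J2k_gens p r k g"
  have "finite (prod_gens (Idiag_pow_gens (k - 1)) (J2JkD_gens p r k g)
          :: (complex^('n + 'n) \<Rightarrow> complex) set)"
    by (intro finite_prod_gens finite_Idiag_pow_gens finite_J2JkD_gens)
  then show "germ_ideal_mem (double X) (dpt x)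
               (prod_gens (Idiag_pow_gens (k - 1)) (J2JkD_gens p r k g)) f"
    using J2k_gen_zero_or_in_prod_gens[OF \<open>f \<in> J2k_gens p r k g\<close> assms(4)]
    by (metis germ_ideal_mem_generator germ_ideal_mem_zero)
qed

end
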